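(* Let $\alpha \in [0,1)$ and let $R$ be a total preorder on $\Omega$ such that $\mathcal{F}(\Omega(\mathbf{x}, R), \alpha)$ is nonempty for every $\mathbf{x} \in \Omega$. Then the pessimal bound $B_R^*$ is consistent with $R$.
   Context: Fix integers $m \ge 2$, $n \ge 1$ and reals $S_{\min} < S_{\max}$; $S = \{S_0,\dots,S_{m-1}\}$ with $S_k = S_{\min} + k\frac{S_{\max}-S_{\min}}{m-1}$. $\mathcal{F}$ is the set of probability distributions on $S$, identified with the probability simplex in $\mathbb{R}^m$ with the Euclidean topology; $E[F]$ is the mean. $\Omega$ is the set of samples of size $n$ from $S$, identified with their sorted versions $x_{(1)} \le \dots \le x_{(n)}$. $P_F[\Omega']$ is the probability that the sorted sample of $n$ i.i.d. draws from $F$ lies in $\Omega' \subseteq \Omega$. $\mathcal{G}(\Omega',\alpha) = \{F : P_F[\Omega'] > \alpha\}$ and $\mathcal{F}(\Omega',\alpha)$ is its closure. A total preorder $R$ on $\Omega$ is a reflexive transitive total relation $\lesssim_R$; $\mathbf{x} \sim_R \mathbf{y}$ means both $\mathbf{x}\lesssim_R\mathbf{y}$ and $\mathbf{y}\lesssim_R\mathbf{x}$, and $\mathbf{x} <_R \mathbf{y}$ means $\mathbf{x}\lesssim_R\mathbf{y}$ but not $\mathbf{x}\sim_R\mathbf{y}$; a total order is a total preorder whose equivalence classes are singletons. The upper set is $\Omega(\mathbf{x}, R) = \{\mathbf{y} \in \Omega : \mathbf{x} \lesssim_R \mathbf{y}\}$. The pessimal bound is $B_R^*(\mathbf{x}) =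 \min\{E[F] : F \in \mathcal{F}(\Omega(\mathbf{x},R),\alpha)\}$. A bound $B:\Omega\to\mathbb{R}$ is consistent with a total order $T$ if $\mathbf{x} \le_T \mathbf{y}$ implies $B(\mathbf{x}) \le B(\mathbf{y})$; a total order $T$ agrees with $R$ if $\mathbf{x} <_R \mathbf{y}$ implies $\mathbf{x} <_T \mathbf{y}$; $B$ is consistent with $R$ if it is consistent with every total order agreeing with $R$. *)

theory Defs
  imports "HOL-Analysis.Analysis"
begin

definition Sval :: "nat \<Rightarrow> real \<Rightarrow> real \<Rightarrow> nat \<Rightarrow> real" where
  "Sval m Smin Smax k = Smin + real k * (Smax - Smin) / real (m - 1)"

definition Ssupp :: "nat \<Rightarrow> real \<Rightarrow> real \<Rightarrow> real set" where
  "Ssupp m Smin Smax = Sval m Smin Smax ` {..<m}"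

text \<open>Distributions on S: F is given by its weights p k = F({S_k}) for k < m,
  and p k = 0 for k >= m (so the set is a copy of the dist_simplex in R^m;
  the product topology on nat => real restricts to the Euclidean one on it).\<close>
definition dist_simplex :: "nat \<Rightarrow> (nat \<Rightarrow> real) set" where
  "dist_simplex m = {p. (\<forall>k<m. 0 \<le> p k) \<and> (\<forall>k. m \<le> k \<longrightarrow> p k = 0) \<and> (\<Sum>k<m. p k) = 1}"

definition mean :: "nat \<Rightarrow> real \<Rightarrow> real \<Rightarrow> (nat \<Rightarrow> real) \<Rightarrow> real" where
  "mean m Smin Smax p = (\<Sum>k<m. p k * Sval m Smin Smax k)"

text \<open>Omega: samples of size n from S, identified with their sorted versions.\<close>
definition samples :: "nat \<Rightarrow> nat \<Rightarrow> real \<Rightarrow> real \<Rightarrow> real list set" where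
  "samples m n Smin Smax = {xs. length xs = n \<and> sorted xs \<and> set xs \<subseteq> Ssupp m Smin Smax}"

text \<open>Ordered i.i.d. draws, recorded by the indices of the drawn support points.\<close>
definition draws :: "nat \<Rightarrow> nat \<Rightarrow> nat list set" where
  "draws m n = {ks. length ks = n \<and> set ks \<subseteq> {..<m}}"

definition prob_sample :: "nat \<Rightarrow> nat \<Rightarrow> real \<Rightarrow> real \<Rightarrow> (nat \<Rightarrow> real) \<Rightarrow> real list set \<Rightarrow> real" where
  "prob_sample m n Smin Smax p \<Omega>' =
     (\<Sum>ks \<in> {ks \<in> draws m n. sort (map (Sval m Smin Smax) ks) \<in> \<Omega>'}. prod_list (map p ks))"

definition Gset :: "nat \<Rightarrow> nat \<Rightarrow> real \<Rightarrow> real \<Rightarrow> real list set \<Rightarrow> real \<Rightarrow> (nat \<Rightarrow> real) set" where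
  "Gset m n Smin Smax \<Omega>' \<alpha> = {p \<in> dist_simplex m. prob_sample m n Smin Smax p \<Omega>' > \<alpha>}"

definition Fset :: "nat \<Rightarrow> nat \<Rightarrow> real \<Rightarrow> real \<Rightarrow> real list set \<Rightarrow> real \<Rightarrow> (nat \<Rightarrow> real) set" where
  "Fset m n Smin Smax \<Omega>' \<alpha> = closure (Gset m n Smin Smax \<Omega>' \<alpha>)"

definition total_preorder_on :: "'a set \<Rightarrow> 'a rel \<Rightarrow> bool" where
  "total_preorder_on A R \<longleftrightarrow>
     (\<forall>x\<in>A. (x, x) \<in> R) \<and>
     (\<forall>x\<in>A. \<forall>y\<in>A. \<forall>z\<in>A. (x, y) \<in> R \<longrightarrow> (y, z) \<in> R \<longrightarrow> (x, z) \<in> R) \<and>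
     (\<forall>x\<in>A. \<forall>y\<in>A. (x, y) \<in> R \<or> (y, x) \<in> R)"

definition total_order_on :: "'a set \<Rightarrow> 'a rel \<Rightarrow> bool" where
  "total_order_on A T \<longleftrightarrow> total_preorder_on A T \<and>
     (\<forall>x\<in>A. \<forall>y\<in>A. (x, y) \<in> T \<longrightarrow> (y, x) \<in> T \<longrightarrow> x = y)"

definition strict_of :: "'a rel \<Rightarrow> 'a \<Rightarrow> 'a \<Rightarrow> bool" where
  "strict_of R x y \<longleftrightarrow> (x, y) \<in> R \<and> (y, x) \<notin> R"

definition upset :: "'a set \<Rightarrow> 'a rel \<Rightarrow> 'a \<Rightarrow> 'a set" where
  "upset A R x = {y \<in> A. (x, y) \<in> R}"

definition pessimal :: "nat \<Rightarrow> nat \<Rightarrow> real \<Rightarrow> real \<Rightarrow> real \<Rightarrow> real list rel \<Rightarrow> real list \<Rightarrow> real" where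
  "pessimal m n Smin Smax \<alpha> R x =
     Inf (mean m Smin Smax ` Fset m n Smin Smax (upset (samples m n Smin Smax) R x) \<alpha>)"

definition consistent_with_order :: "'a set \<Rightarrow> ('a \<Rightarrow> real) \<Rightarrow> 'a rel \<Rightarrow> bool" where
  "consistent_with_order A B T \<longleftrightarrow> (\<forall>x\<in>A. \<forall>y\<in>A. (x, y) \<in> T \<longrightarrow> B x \<le> B y)"

definition agrees_with :: "'a set \<Rightarrow> 'a rel \<Rightarrow> 'a rel \<Rightarrow> bool" where
  "agrees_with A T R \<longleftrightarrow> (\<forall>x\<in>A. \<forall>y\<in>A. strict_of R x y \<longrightarrow> strict_of T x y)"

definition consistent_with_preorder :: "'a set \<Rightarrow> ('a \<Rightarrow> real) \<Rightarrow> 'a rel \<Rightarrow> bool" where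
  "consistent_with_preorder A B R \<longleftrightarrow>
     (\<forall>T. total_order_on A T \<longrightarrow> agrees_with A T R \<longrightarrow> consistent_with_order A B T)"

end

theory Submission
  imports Defs
begin

text \<open>If \<open>x \<le>\<^sub>T y\<close> for a total order \<open>T\<close> agreeing with \<open>R\<close>, then \<open>x \<lesssim>\<^sub>R y\<close>, since otherwise
  totality of \<open>R\<close> gives \<open>y <\<^sub>R x\<close> and hence \<open>y <\<^sub>T x\<close>. So it suffices that \<open>B\<^sup>*\<^sub>R\<close> is
  monotone along \<open>R\<close>. By transitivity, \<open>x \<lesssim>\<^sub>R y\<close> gives \<open>\<Omega>(y,R) \<subseteq> \<Omega>(x,R)\<close>; \<open>P\<^sub>F\<close> is
  monotone in the event, so \<open>\<G>\<close> and its closure \<open>\<F>\<close> only grow from \<open>y\<close> to \<open>x\<close>, and the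
  infimum of the mean over the larger set is smaller. The infima are finite because \<open>\<F>\<close>
  lies in the closed simplex, where every mean is at least \<open>S\<^sub>m\<^sub>i\<^sub>n\<close>.\<close>

lemma agrees_with_imp_preorder:
  assumes "total_preorder_on A R" "agrees_with A T R"
    and "x \<in> A" "y \<in> A" "(x, y) \<in> T"
  shows "(x, y) \<in> R"
proof (rule ccontr)
  assume "(x, y) \<notin> R"
  moreover from assms(1,3,4) have "(x, y) \<in> R \<or> (y, x) \<in> R"
    unfolding total_preorder_on_def by blast
  ultimately have "strict_of R y x"
    by (simp add: strict_of_def)
  with assms(2-4) have "strict_of T y x"
    by (simp add: agrees_with_def)
  with assms(5) show False
    by (simp add: strict_of_def)
qed

lemma consistent_with_preorder_if_monotone:
  assumes "total_preorder_on A R"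
    and "\<And>x y. x \<in> A \<Longrightarrow> y \<in> A \<Longrightarrow> (x, y) \<in> R \<Longrightarrow> B x \<le> B y"
  shows "consistent_with_preorder A B R"
  unfolding consistent_with_preorder_def consistent_with_order_def
proof (intro allI impI ballI)
  fix T x y
  assume "agrees_with A T R" "x \<in> A" "y \<in> A" "(x, y) \<in> T"
  with assms(1) have "(x, y) \<in> R"
    by (rule agrees_with_imp_preorder)
  with \<open>x \<in> A\<close> \<open>y \<in> A\<close> show "B x \<le> B y"
    by (rule assms(2))
qed

lemma upset_antimono:
  assumes "total_preorder_on A R" "x \<in> A" "y \<in> A" "(x, y) \<in> R"
  shows "upset A R y \<subseteq> upset A R x"
proof
  fix z assume "z \<in> upset A R y"
  then have "z \<in> A" "(y, z) \<in> R"
    by (simp_all add: upset_def)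
  with assms have "(x, z) \<in> R"
    unfolding total_preorder_on_def by blast
  with \<open>z \<in> A\<close> show "z \<in> upset A R x"
    by (simp add: upset_def)
qed

lemma finite_draws: "finite (draws m n)"
proof -
  have "draws m n = {ks. set ks \<subseteq> {..<m} \<and> length ks = n}"
    by (auto simp: draws_def)
  then show ?thesis
    by (simp add: finite_lists_length_eq)
qed

lemma prob_sample_mono:
  assumes "p \<in> dist_simplex m" "A \<subseteq> B"
  shows "prob_sample m n Smin Smax p A \<le> prob_sample m n Smin Smax p B"
  unfolding prob_sample_def
proof (rule sum_mono2)
  let ?event = "\<lambda>E. {ks \<in> draws m n. sort (map (Sval m Smin Smax) ks) \<in> E}"
  show "finite (?event B)"
    by (simp add: finite_draws)
  show "?event A \<subseteq> ?event B"
    using assms(2) by auto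
  fix ks assume "ks \<in> ?event B - ?event A"
  then have "set ks \<subseteq> {..<m}"
    by (auto simp: draws_def)
  with assms(1) show "0 \<le> prod_list (map p ks)"
    by (intro prod_list_nonneg) (auto simp: dist_simplex_def)
qed

lemma Gset_mono:
  assumes "A \<subseteq> B"
  shows "Gset m n Smin Smax A \<alpha> \<subseteq> Gset m n Smin Smax B \<alpha>"
proof
  fix p assume "p \<in> Gset m n Smin Smax A \<alpha>"
  then have p: "p \<in> dist_simplex m" "\<alpha> < prob_sample m n Smin Smax p A"
    by (auto simp: Gset_def)
  moreover have "prob_sample m n Smin Smax p A \<le> prob_sample m n Smin Smax p B"
    using p(1) assms by (rule prob_sample_mono)
  ultimately show "p \<in> Gset m n Smin Smax B \<alpha>"
    by (simp add: Gset_def)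
qed

lemma Fset_mono:
  "A \<subseteq> B \<Longrightarrow> Fset m n Smin Smax A \<alpha> \<subseteq> Fset m n Smin Smax B \<alpha>"
  unfolding Fset_def by (intro closure_mono Gset_mono)

lemma closed_dist_simplex: "closed (dist_simplex m)"
proof -
  have coordinate: "continuous_on UNIV (\<lambda>p :: nat \<Rightarrow> real. p k)" for k
    by (rule continuous_on_product_coordinates)
  have total: "continuous_on UNIV (\<lambda>p :: nat \<Rightarrow> real. \<Sum>k<m. p k)"
    by (intro continuous_intros coordinate)
  have "dist_simplex m = (\<Inter>k<m. {p. 0 \<le> p k}) \<inter> (\<Inter>k\<in>{m..}. {p. p k = 0})
      \<inter> {p. (\<Sum>k<m. p k) = 1}"
    by (auto simp: dist_simplex_def)
  also have "closed \<dots>"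
    by (intro closed_Int closed_INT ballI closed_Collect_le closed_Collect_eq
        continuous_on_const coordinate total)
  finally show ?thesis .
qed

lemma Fset_subset_dist_simplex: "Fset m n Smin Smax A \<alpha> \<subseteq> dist_simplex m"
  unfolding Fset_def
  by (rule closure_minimal) (auto simp: Gset_def closed_dist_simplex)

lemma Sval_ge_Smin: "Smin \<le> Smax \<Longrightarrow> Smin \<le> Sval m Smin Smax k"
  by (simp add: Sval_def)

lemma mean_ge_Smin:
  assumes "Smin \<le> Smax" "p \<in> dist_simplex m"
  shows "Smin \<le> mean m Smin Smax p"
proof -
  have "Smin = (\<Sum>k<m. p k * Smin)"
    using assms(2) by (simp add: dist_simplex_def flip: sum_distrib_right)
  also have "\<dots> \<le> (\<Sum>k<m. p k * Sval m Smin Smax k)"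
    using assms by (intro sum_mono mult_left_mono Sval_ge_Smin) (auto simp: dist_simplex_def)
  finally show ?thesis
    by (simp add: mean_def)
qed

lemma bdd_below_mean_Fset:
  assumes "Smin \<le> Smax"
  shows "bdd_below (mean m Smin Smax ` Fset m n Smin Smax A \<alpha>)"
proof (rule bdd_belowI2)
  fix p assume "p \<in> Fset m n Smin Smax A \<alpha>"
  with Fset_subset_dist_simplex have "p \<in> dist_simplex m" ..
  with assms show "Smin \<le> mean m Smin Smax p"
    by (rule mean_ge_Smin)
qed

lemma pessimal_mono:
  assumes "Smin \<le> Smax" "total_preorder_on (samples m n Smin Smax) R"
    and "x \<in> samples m n Smin Smax" "y \<in> samples m n Smin Smax" "(x, y) \<in> R"
    and "Fset m n Smin Smax (upset (samples m n Smin Smax) R y) \<alpha> \<noteq> {}"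
  shows "pessimal m n Smin Smax \<alpha> R x \<le> pessimal m n Smin Smax \<alpha> R y"
proof -
  have "upset (samples m n Smin Smax) R y \<subseteq> upset (samples m n Smin Smax) R x"
    using assms(2-5) by (rule upset_antimono)
  then show ?thesis
    unfolding pessimal_def
    using assms(1,6)
    by (intro cInf_superset_mono image_mono Fset_mono bdd_below_mean_Fset) auto
qed

theorem lemma4:
  fixes m n :: nat and Smin Smax \<alpha> :: real and R :: "real list rel"
  assumes "m \<ge> 2" and "n \<ge> 1" and "Smin < Smax"
    and "0 \<le> \<alpha>" and "\<alpha> < 1"
    and "total_preorder_on (samples m n Smin Smax) R"
    and "\<forall>x \<in> samples m n Smin Smax.
           Fset m n Smin Smax (upset (samples m n Smin Smax) R x) \<alpha> \<noteq> {}"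
  shows "consistent_with_preorder (samples m n Smin Smax) (pessimal m n Smin Smax \<alpha> R) R"
proof (rule consistent_with_preorder_if_monotone[OF assms(6)])
  fix x y
  assume "x \<in> samples m n Smin Smax" "y \<in> samples m n Smin Smax" "(x, y) \<in> R"
  with assms(3,6,7) show "pessimal m n Smin Smax \<alpha> R x \<le> pessimal m n Smin Smax \<alpha> R y"
    by (intro pessimal_mono) auto
qed

end
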